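(* Let $v:\mathbb{T}\to\mathbb{R}$ be a real-valued function on the unit circle $\mathbb{T}=\{|w|=1\}$ which is analytic (i.e. extends holomorphically to an open neighborhood of $\mathbb{T}$). Let $\mathsf{T}(v)=\pi_\bullet v\,\pi_\bullet$ be the Toeplitz operator with symbol $v$ on the Hardy space $H_\bullet$, and $\mathsf{T}_+(v)=\pi_+ v\,\pi_+$. Then the spectral shift function $\xi_{\mathsf{T}_+(v)/\mathsf{T}(v)}$ of $\mathsf{T}(v)$ at the vacuum vector $|0\rangle=w^0$ is $$2\pi\cdot \xi_{\mathsf{T}_+(v)/\mathsf{T}(v)}(c)=(v_*d\theta)\big((-\infty,c)\big),$$ i.e. $\xi_{\mathsf{T}_+(v)/\mathsf{T}(v)}(c)=\frac{1}{2\pi}\,\mathrm{Leb}\{\theta\in[0,2\pi):v(e^{\mathbf{i}\theta})<c\}$ is the distribution function of the push-forward along $v$ of the normalized uniform (Haar) measure on $\mathbb{T}$.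
   Context: $L^2(\mathbb{T})$ carries the pairing $\langle f,g\rangle=\frac{1}{2\pi\mathbf{i}}\oint_{|w|=1}\overline{f(w)}g(w)\frac{dw}{w}$. The Hardy space $H_\bullet$ is the closure of $\mathbb{C}[w]$ in $L^2(\mathbb{T})$; $\pi_\bullet$ is the orthogonal projection of $L^2(\mathbb{T})$ onto $H_\bullet$ (killing negative powers of $w$), $\pi_0=|0\rangle\langle 0|$ is projection onto the constants, and $\pi_+=\pi_\bullet-\pi_0$ is projection onto the closed span of $w^h$, $h\ge 1$. For a bounded self-adjoint $T$ on $H_\bullet$ and $T_+=\pi_+T\pi_+$, the operators $T^l-T_+^l$ are trace class, and the spectral shift function $\xi_{T_+/T}$ is the distribution function satisfying $\mathrm{Tr}(T^l-T_+^l)=\int_{-\infty}^\infty c^l\,d\xi_{T_+/T}(c)$ for all $l\in\mathbb{N}$ (equivalently $\langle 0|(u-T)^{-1}|0\rangle=\exp\big(\int\log\frac{1}{u-c}\,d\xi_{T_+/T}(c)\big)$). *)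

theory Defs
  imports "HOL-Complex_Analysis.Complex_Analysis"
begin

text \<open>Infinite matrices indexed by nat x nat represent operators on the Hardy space
  H_bullet in its orthonormal basis w^0, w^1, w^2, ...  (index j stands for w^j).\<close>

type_synonym imat = "nat \<Rightarrow> nat \<Rightarrow> complex"

definition fourier_coeff :: "(complex \<Rightarrow> real) \<Rightarrow> int \<Rightarrow> complex" where
  "fourier_coeff v n =
     integral {0..2*pi} (\<lambda>\<theta>. complex_of_real (v (cis \<theta>)) * cis (- (of_int n * \<theta>))) / complex_of_real (2*pi)"

text \<open>Matrix of the Toeplitz operator T(v) = pi_bullet v pi_bullet:
  entry (j,k) is <w^j | v w^k> = hat v (j - k).\<close>
definition toeplitz_mat :: "(complex \<Rightarrow> real) \<Rightarrow> imat" where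
  "toeplitz_mat v j k = fourier_coeff v (int j - int k)"

text \<open>Matrix of T_+(v) = pi_+ T(v) pi_+ (pi_+ kills the basis vector w^0).\<close>
definition toeplitz_plus_mat :: "(complex \<Rightarrow> real) \<Rightarrow> imat" where
  "toeplitz_plus_mat v j k = (if 1 \<le> j \<and> 1 \<le> k then toeplitz_mat v j k else 0)"

definition imat_mult :: "imat \<Rightarrow> imat \<Rightarrow> imat" where
  "imat_mult A B j k = (\<Sum>m. A j m * B m k)"

definition imat_id :: imat where
  "imat_id j k = (if j = k then 1 else 0)"

fun imat_pow :: "imat \<Rightarrow> nat \<Rightarrow> imat" where
  "imat_pow A 0 = imat_id"
| "imat_pow A (Suc l) = imat_mult (imat_pow A l) A"

definition analytic_on_circle :: "(complex \<Rightarrow> real) \<Rightarrow> bool" where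
  "analytic_on_circle v \<longleftrightarrow>
     (\<exists>S g. open S \<and> sphere 0 1 \<subseteq> S \<and> g holomorphic_on S \<and>
            (\<forall>w\<in>sphere 0 1. g w = complex_of_real (v w)))"

definition ssf_claim :: "(complex \<Rightarrow> real) \<Rightarrow> real \<Rightarrow> real" where
  "ssf_claim v c = measure lborel {\<theta>\<in>{0..<2*pi}. v (cis \<theta>) < c} / (2*pi)"

end

theory Submission
  imports Defs
begin

text \<open>An analytic symbol v has geometrically decaying Fourier coefficients a (shift the contour of
  the Laurent integral to either boundary circle of an annulus of holomorphy), and its Fourier series
  converges absolutely, so the Fourier coefficients c_l of v^l are the convolution powers of a. By
  induction on l, the entry (j, k) of T(v)^l differs from c_l(j - k) by O(r^k) for some r < 1.
  Since T_+(v)^l is T(v)^l shifted by one step along the diagonal, the partial sums of the diagonal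
  differences telescope to the entry (N, N) of T(v)^l, which tends to
  c_l(0) = (1/2pi) * integral of v(e^(i theta))^l over [0, 2pi], the l-th moment of the push-forward
  of d theta / 2pi along v.\<close>

section \<open>Contour integrals over circles\<close>

lemma annulus_subset_open:
  assumes "open S" "sphere (0::complex) 1 \<subseteq> S"
  obtains e where "0 < e" "e < 1" "\<And>z. 1 - e < norm z \<Longrightarrow> norm z < 1 + e \<Longrightarrow> z \<in> S"
proof -
  obtain \<epsilon> where \<epsilon>: "\<epsilon> > 0" "(\<Union>x\<in>sphere (0::complex) 1. ball x \<epsilon>) \<subseteq> S"
    using compact_subset_open_imp_ball_epsilon_subset[OF compact_sphere assms] by blast
  define e where "e = min \<epsilon> (1/2)"
  have e: "0 < e" "e < 1" using \<epsilon> by (auto simp: e_def)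
  moreover have "z \<in> S" if "1 - e < norm z" "norm z < 1 + e" for z
  proof -
    have "norm z > 0" using that e by linarith
    define x where "x = z / of_real (norm z)"
    have x: "x \<in> sphere 0 1" using \<open>norm z > 0\<close> by (simp add: x_def norm_divide)
    have "z - x = of_real (norm z - 1) * x" using \<open>norm z > 0\<close> by (simp add: x_def field_simps)
    then have "dist x z = norm (of_real (norm z - 1) * x)"
      by (metis dist_norm dist_commute)
    also have "\<dots> = \<bar>norm z - 1\<bar>" using x by (simp only: norm_mult norm_of_real) simp
    finally have "dist x z = \<bar>norm z - 1\<bar>" .
    then have "z \<in> ball x \<epsilon>" using that by (auto simp: e_def dist_commute)
    then show ?thesis using \<epsilon> x by blast
  qed
  ultimately show ?thesis using that by blast
qed

lemma contour_integral_circlepath_radius_eq: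
  assumes hol: "f holomorphic_on A" and A: "open A"
    and sub: "\<And>z. r1 \<le> norm z \<Longrightarrow> norm z \<le> r2 \<Longrightarrow> z \<in> A" and r: "0 < r1" "r1 \<le> r2"
  shows "contour_integral (circlepath 0 r1) f = contour_integral (circlepath 0 r2) f"
proof (rule Cauchy_theorem_homotopic_loops[OF _ A hol])
  show "homotopic_loops A (circlepath 0 r1) (circlepath 0 r2)"
  proof (rule homotopic_loops_linear)
    fix t :: real
    show "closed_segment (circlepath 0 r1 t) (circlepath 0 r2 t) \<subseteq> A"
    proof
      fix x assume "x \<in> closed_segment (circlepath 0 r1 t) (circlepath 0 r2 t)"
      then obtain u where u: "0 \<le> u" "u \<le> 1"
        and x: "x = (1 - u) *\<^sub>R circlepath 0 r1 t + u *\<^sub>R circlepath 0 r2 t"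
        by (auto simp: closed_segment_def)
      define E where "E = exp (2 * of_real pi * \<i> * of_real t)"
      have "x = of_real ((1-u)*r1 + u*r2) * E"
        by (simp add: x circlepath E_def scaleR_conv_of_real algebra_simps)
      then have "norm x = \<bar>(1-u)*r1 + u*r2\<bar>"
        by (simp only: norm_mult norm_of_real) (simp add: E_def)
      moreover have "r1 \<le> (1-u)*r1 + u*r2" "(1-u)*r1 + u*r2 \<le> r2"
        using u r mult_left_mono[OF r(2), of u] mult_left_mono[OF r(2), of "1-u"]
        by (auto simp: algebra_simps)
      ultimately show "x \<in> A" using sub r by simp
    qed
  qed auto
qed auto

lemma Cauchy_integral_annulus:
  fixes g :: "complex \<Rightarrow> complex"
  assumes A: "open A" and hol: "g holomorphic_on A"
    and sub: "\<And>z. r1 \<le> norm z \<Longrightarrow> norm z \<le> r2 \<Longrightarrow> z \<in> A"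
    and r: "0 < r1" "r1 < norm w" "norm w < r2"
  shows "2*pi*\<i> * g w = contour_integral (circlepath 0 r2) (\<lambda>u. g u / (u - w))
                        - contour_integral (circlepath 0 r1) (\<lambda>u. g u / (u - w))"
proof -
  have "w \<in> A" using sub r by auto
  define h where "h = (\<lambda>u. if u = w then deriv g w else (g u - g w) / (u - w))"
  have "h holomorphic_on A" unfolding h_def
    by (rule pole_lemma[OF hol]) (simp add: interior_open[OF A] \<open>w \<in> A\<close>)
  then have h_eq: "contour_integral (circlepath 0 r1) h = contour_integral (circlepath 0 r2) h"
    by (rule contour_integral_circlepath_radius_eq[OF _ A sub]) (use r in auto)
  have h_split: "contour_integral (circlepath 0 \<rho>) h = contour_integral (circlepath 0 \<rho>) (\<lambda>u. g u / (u - w))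
                   - g w * contour_integral (circlepath 0 \<rho>) (\<lambda>u. 1 / (u - w))"
    if "0 < \<rho>" "sphere 0 \<rho> \<subseteq> A" "norm w \<noteq> \<rho>" for \<rho>
  proof -
    have nw: "u \<noteq> w" if "u \<in> sphere 0 \<rho>" for u using that \<open>norm w \<noteq> \<rho>\<close> by auto
    have "continuous_on (sphere 0 \<rho>) g"
      using holomorphic_on_imp_continuous_on[OF hol] that(2) continuous_on_subset by blast
    then have i1: "(\<lambda>u. g u / (u - w)) contour_integrable_on circlepath 0 \<rho>"
      and i2: "(\<lambda>u. 1 / (u - w)) contour_integrable_on circlepath 0 \<rho>"
      using that nw by (auto intro!: contour_integrable_continuous_circlepath continuous_intros)
    have "contour_integral (circlepath 0 \<rho>) h =
          contour_integral (circlepath 0 \<rho>) (\<lambda>u. g u / (u - w) - g w * (1 / (u - w)))"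
      by (rule contour_integral_eq) (use that nw in \<open>auto simp: h_def diff_divide_distrib\<close>)
    also have "\<dots> = contour_integral (circlepath 0 \<rho>) (\<lambda>u. g u / (u - w))
              - g w * contour_integral (circlepath 0 \<rho>) (\<lambda>u. 1 / (u - w))"
      by (subst contour_integral_diff[OF i1 contour_integrable_lmul[OF i2]])
         (simp only: contour_integral_lmul[OF i2])
    finally show ?thesis .
  qed
  have outer: "contour_integral (circlepath 0 r2) (\<lambda>u. 1 / (u - w)) = 2*pi*\<i>"
    using contour_integral_unique[OF Cauchy_integral_circlepath_simple[of "\<lambda>_. 1" 0 r2 w]] r
    by simp
  have inner: "contour_integral (circlepath 0 r1) (\<lambda>u. 1 / (u - w)) = 0"
  proof (rule contour_integral_unique, rule Cauchy_theorem_convex_simple[of _ "ball 0 (norm w)"])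
    show "(\<lambda>u. 1 / (u - w)) holomorphic_on ball 0 (norm w)"
      by (intro holomorphic_intros) auto
  qed (use r in auto)
  have "sphere 0 r2 \<subseteq> A" "sphere 0 r1 \<subseteq> A" using sub r by auto
  then show ?thesis
    using h_eq h_split[of r1] h_split[of r2] r inner outer by (simp add: algebra_simps)
qed

lemma sums_contour_integral_geometric:
  fixes f p :: "complex \<Rightarrow> complex"
  assumes r: "0 < r" and cf: "continuous_on (sphere 0 r) f" and cp: "continuous_on (sphere 0 r) p"
    and q: "0 \<le> q" "q < 1" and pq: "\<And>u. u \<in> sphere 0 r \<Longrightarrow> norm (p u) \<le> q"
  shows "(\<lambda>k. contour_integral (circlepath 0 r) (\<lambda>u. f u * p u ^ k)) sums
           contour_integral (circlepath 0 r) (\<lambda>u. f u / (1 - p u))"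
proof -
  obtain B where B: "0 \<le> B" "\<And>u. u \<in> sphere 0 r \<Longrightarrow> norm (f u) \<le> B"
    using continuous_on_compact_bound[OF compact_sphere cf] by blast
  have "uniform_limit (sphere 0 r) (\<lambda>n u. \<Sum>k<n. f u * p u ^ k)
          (\<lambda>u. \<Sum>k. f u * p u ^ k) sequentially"
  proof (rule Weierstrass_m_test)
    show "summable (\<lambda>k. B * q ^ k)" using q by (intro summable_mult summable_geometric) auto
    show "norm (f u * p u ^ k) \<le> B * q ^ k" if "u \<in> sphere 0 r" for k u
      unfolding norm_mult norm_power
      by (intro mult_mono power_mono B pq that) (use q in auto)
  qed
  moreover have "(\<Sum>k. f u * p u ^ k) = f u / (1 - p u)" if "u \<in> sphere 0 r" for u
    using pq[OF that] q by (simp add: suminf_mult suminf_geometric summable_geometric divide_inverse)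
  ultimately have ul: "uniform_limit (sphere 0 r) (\<lambda>n u. \<Sum>k<n. f u * p u ^ k)
                         (\<lambda>u. f u / (1 - p u)) sequentially"
    by (subst (asm) uniform_limit_cong') auto
  have ci: "(\<lambda>u. f u * p u ^ k) contour_integrable_on circlepath 0 r" for k
    using r by (intro contour_integrable_continuous_circlepath continuous_intros)
       (auto intro: continuous_on_subset[OF cf] continuous_on_subset[OF cp])
  have "(\<lambda>n. contour_integral (circlepath 0 r) (\<lambda>u. \<Sum>k<n. f u * p u ^ k)) \<longlonglongrightarrow>
          contour_integral (circlepath 0 r) (\<lambda>u. f u / (1 - p u))"
    by (rule contour_integral_uniform_limit_circlepath[OF _ ul])
       (use r ci in \<open>auto intro!: contour_integrable_sum always_eventually\<close>)
  then show ?thesis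
    by (simp add: sums_def contour_integral_sum[OF _ ci])
qed

lemma has_integral_circlepath_cis:
  assumes "f contour_integrable_on circlepath 0 1"
  shows "((\<lambda>t. f (cis t) * cis t) has_integral contour_integral (circlepath 0 1) f / \<i>) {0..2*pi}"
proof -
  have "(f has_contour_integral contour_integral (circlepath 0 1) f) (part_circlepath 0 1 0 (2*pi))"
    using has_contour_integral_integral[OF assms] by (simp add: circlepath_def)
  then have "((\<lambda>t. f (cis t) * \<i> * cis t) has_integral contour_integral (circlepath 0 1) f) {0..2*pi}"
    by (subst (asm) has_contour_integral_part_circlepath_iff) auto
  then have "((\<lambda>t. f (cis t) * \<i> * cis t * (- \<i>)) has_integral
               contour_integral (circlepath 0 1) f * (- \<i>)) {0..2*pi}"
    by (rule has_integral_mult_left)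
  then show ?thesis by (simp add: divide_inverse algebra_simps)
qed

lemma summable_norm_comp_inj:
  fixes f :: "'b \<Rightarrow> 'a::real_normed_vector"
  assumes "(\<lambda>x. norm (f x)) summable_on UNIV" and "inj h"
  shows "summable (\<lambda>k. norm (f (h k)))"
proof -
  have "(\<lambda>x. norm (f x)) summable_on range h"
    using assms(1) by (rule summable_on_subset_banach) simp
  then show ?thesis
    using assms(2) by (intro summable_on_imp_summable) (simp add: summable_on_reindex o_def)
qed

lemma has_sum_int_from_sums:
  fixes f :: "int \<Rightarrow> 'a::banach"
  assumes "summable (\<lambda>k. norm (f (int k)))" "summable (\<lambda>k. norm (f (- int k - 1)))"
    and "(\<lambda>k. f (int k)) sums S" "(\<lambda>k. f (- int k - 1)) sums T"
  shows "(f has_sum (S + T)) UNIV"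
proof -
  have nonneg: "(f has_sum S) (range int)"
    using has_sum_reindex[of int UNIV f S] norm_summable_imp_has_sum[OF assms(1,3)]
    by (simp add: o_def)
  have "inj (\<lambda>k::nat. - int k - 1)" by (auto simp: inj_def)
  then have neg: "(f has_sum T) (range (\<lambda>k. - int k - 1))"
    using has_sum_reindex[of "\<lambda>k. - int k - 1" UNIV f T] norm_summable_imp_has_sum[OF assms(2,4)]
    by (simp add: o_def)
  have "n \<in> range int \<union> range (\<lambda>k. - int k - 1)" for n :: int
  proof (cases "n \<ge> 0")
    case True then show ?thesis by (auto intro!: image_eqI[of _ _ "nat n"])
  next
    case False then show ?thesis by (auto intro!: image_eqI[of _ _ "nat (- n - 1)"])
  qed
  then have "range int \<union> range (\<lambda>k. - int k - 1) = UNIV" by auto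
  moreover have "range int \<inter> range (\<lambda>k. - int k - 1) = {}" by auto
  ultimately show ?thesis using has_sum_Un_disjoint[OF nonneg neg] by simp
qed

lemma has_sum_power_abs_int:
  fixes \<rho> :: real
  assumes "0 \<le> \<rho>" "\<rho> < 1"
  shows "((\<lambda>n::int. \<rho> ^ nat \<bar>n\<bar>) has_sum (1 + \<rho>) / (1 - \<rho>)) UNIV"
proof -
  have "((\<lambda>n::int. \<rho> ^ nat \<bar>n\<bar>) has_sum (1 / (1 - \<rho>) + \<rho> / (1 - \<rho>))) UNIV"
  proof (rule has_sum_int_from_sums)
    have nat_abs: "nat \<bar>- int k - 1\<bar> = Suc k" for k by simp
    then have neg: "(\<lambda>k. \<rho> ^ nat \<bar>- int k - 1\<bar>) = (\<lambda>k. \<rho> * \<rho> ^ k)" by simp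
    show "summable (\<lambda>k. norm (\<rho> ^ nat \<bar>int k\<bar>))" using assms by simp
    show "summable (\<lambda>k. norm (\<rho> ^ nat \<bar>- int k - 1\<bar>))"
      using nat_abs assms by (simp add: summable_mult)
    show "(\<lambda>k. \<rho> ^ nat \<bar>int k\<bar>) sums (1 / (1 - \<rho>))" using assms geometric_sums[of \<rho>] by simp
    show "(\<lambda>k. \<rho> ^ nat \<bar>- int k - 1\<bar>) sums (\<rho> / (1 - \<rho>))"
      unfolding neg using sums_mult[OF geometric_sums[of \<rho>], of \<rho>] assms by simp
  qed
  then show ?thesis by (simp add: add_divide_distrib)
qed

section \<open>The Fourier series of an analytic symbol\<close>

locale analytic_circle_symbol =
  fixes v :: "complex \<Rightarrow> real" and g :: "complex \<Rightarrow> complex" and A :: "complex set"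
    and r R :: real
  assumes open_A: "open A" and holomorphic_g: "g holomorphic_on A" and zero_notin_A: "0 \<notin> A"
    and radii: "0 < r" "r < 1" "1 < R"
    and annulus_subset: "\<And>z. r \<le> norm z \<Longrightarrow> norm z \<le> R \<Longrightarrow> z \<in> A"
    and g_eq_v: "\<And>w. norm w = 1 \<Longrightarrow> g w = complex_of_real (v w)"

lemma analytic_on_circle_imp_symbol:
  assumes "analytic_on_circle v"
  obtains g A r R where "analytic_circle_symbol v g A r R"
proof -
  obtain S g where S: "open S" "sphere 0 1 \<subseteq> S" and hol: "g holomorphic_on S"
    and gv: "\<forall>w\<in>sphere 0 1. g w = complex_of_real (v w)"
    using assms unfolding analytic_on_circle_def by blast
  obtain e where e: "0 < e" "e < 1" "\<And>z. 1 - e < norm z \<Longrightarrow> norm z < 1 + e \<Longrightarrow> z \<in> S"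
    using annulus_subset_open[OF S] by blast
  have "analytic_circle_symbol v g (ball 0 (1 + e) - cball 0 (1 - e)) (1 - e/2) (1 + e/2)"
    using e gv by unfold_locales (auto intro: holomorphic_on_subset[OF hol])
  then show ?thesis using that by blast
qed

context analytic_circle_symbol
begin

lemma continuous_on_sphere:
  assumes "r \<le> s" "s \<le> R"
  shows "continuous_on (sphere 0 s) g"
  using holomorphic_on_imp_continuous_on[OF holomorphic_g] annulus_subset assms
  by (auto intro: continuous_on_subset)

lemma continuous_on_symbol: "continuous_on UNIV (\<lambda>\<theta>. v (cis \<theta>))"
proof -
  have "continuous_on UNIV (\<lambda>\<theta>. g (cis \<theta>))"
    using radii by (intro continuous_on_compose2[OF continuous_on_sphere[of 1]] continuous_intros) auto
  then have "continuous_on UNIV (\<lambda>\<theta>. Re (g (cis \<theta>)))" by (intro continuous_intros)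
  then show ?thesis by (simp add: g_eq_v)
qed

lemma fourier_coeff_circlepath:
  assumes s: "r \<le> s" "s \<le> R"
  shows "fourier_coeff v n =
           contour_integral (circlepath 0 s) (\<lambda>u. g u * u powi (- n - 1)) / (2 * pi * \<i>)"
proof -
  let ?f = "\<lambda>u. g u * u powi (- n - 1)"
  have hol: "?f holomorphic_on A"
    using zero_notin_A by (intro holomorphic_intros holomorphic_g) auto
  have "?f contour_integrable_on circlepath 0 1"
    using continuous_on_sphere[of 1] radii
    by (intro contour_integrable_continuous_circlepath continuous_intros) auto
  then have "((\<lambda>t. ?f (cis t) * cis t) has_integral contour_integral (circlepath 0 1) ?f / \<i>) {0..2*pi}"
    by (rule has_integral_circlepath_cis)
  moreover have "?f (cis t) * cis t = complex_of_real (v (cis t)) * cis (- (of_int n * t))" for t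
  proof -
    have "cis t powi (- n - 1) * cis t = cis t powi (- n)"
      by (rule power_int_minus_mult) simp
    then show ?thesis by (simp add: g_eq_v mult.assoc cis_power_int)
  qed
  ultimately have "integral {0..2*pi} (\<lambda>t. complex_of_real (v (cis t)) * cis (- (of_int n * t)))
                     = contour_integral (circlepath 0 1) ?f / \<i>"
    by (simp add: integral_unique)
  then have "fourier_coeff v n = contour_integral (circlepath 0 1) ?f / (2 * pi * \<i>)"
    unfolding fourier_coeff_def by (simp only: divide_divide_eq_left mult.commute)
  also have "contour_integral (circlepath 0 1) ?f = contour_integral (circlepath 0 s) ?f"
  proof (cases "s \<le> 1")
    case True
    have "contour_integral (circlepath 0 s) ?f = contour_integral (circlepath 0 1) ?f"
      by (rule contour_integral_circlepath_radius_eq[OF hol open_A])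
         (use radii s True in \<open>auto intro!: annulus_subset\<close>)
    then show ?thesis by simp
  next
    case False
    show ?thesis
      by (rule contour_integral_circlepath_radius_eq[OF hol open_A])
         (use radii s False in \<open>auto intro!: annulus_subset\<close>)
  qed
  finally show ?thesis .
qed

lemma norm_fourier_coeff_le_radius:
  assumes s: "r \<le> s" "s \<le> R" and B: "\<And>u. norm u = s \<Longrightarrow> norm (g u) \<le> B"
  shows "norm (fourier_coeff v n) \<le> B * s powi (- n)"
proof -
  let ?f = "\<lambda>u. g u * u powi (- n - 1)"
  have s0: "0 < s" using s radii by linarith
  have "norm (g (of_real s)) \<le> B" using B s0 by simp
  then have B0: "0 \<le> B" using norm_ge_zero order_trans by blast
  have "?f contour_integrable_on circlepath 0 s"
    using continuous_on_sphere[OF s] s0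
    by (intro contour_integrable_continuous_circlepath continuous_intros) auto
  then have "norm (contour_integral (circlepath 0 s) ?f) \<le> B * s powi (- n - 1) * (2 * pi * s)"
  proof (rule has_contour_integral_bound_circlepath[OF has_contour_integral_integral])
    fix u :: complex assume "norm (u - 0) = s"
    then show "norm (?f u) \<le> B * s powi (- n - 1)"
      using B s0 by (auto simp: norm_mult norm_power_int intro!: mult_right_mono)
  qed (use B0 s0 in auto)
  also have "B * s powi (- n - 1) * (2 * pi * s) = 2 * pi * (B * s powi (- n))"
    using power_int_minus_mult[of s "- n"] s0 by (simp add: mult_ac)
  finally have "norm (contour_integral (circlepath 0 s) ?f) / (2 * pi) \<le> B * s powi (- n)"
    by (simp add: divide_le_eq mult.commute)
  moreover have "norm (fourier_coeff v n) = norm (contour_integral (circlepath 0 s) ?f) / (2 * pi)"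
    by (simp add: fourier_coeff_circlepath[OF s] norm_divide norm_mult)
  ultimately show ?thesis by simp
qed

lemma fourier_coeff_decay:
  obtains \<rho> K where "0 < \<rho>" "\<rho> < 1" "0 \<le> K" "\<And>n. norm (fourier_coeff v n) \<le> K * \<rho> ^ nat \<bar>n\<bar>"
proof -
  have "continuous_on (sphere 0 r \<union> sphere 0 R) g"
    using radii by (intro continuous_on_closed_Un continuous_on_sphere) auto
  then obtain K where K: "0 \<le> K" "\<And>u. u \<in> sphere 0 r \<union> sphere 0 R \<Longrightarrow> norm (g u) \<le> K"
    by (rule continuous_on_compact_bound[rotated]) auto
  define \<rho> where "\<rho> = max r (1 / R)"
  have \<rho>: "0 < \<rho>" "\<rho> < 1" using radii by (auto simp: \<rho>_def)
  have "norm (fourier_coeff v n) \<le> K * \<rho> ^ nat \<bar>n\<bar>" for n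
  proof (cases "n \<ge> 0")
    case True
    have "norm (fourier_coeff v n) \<le> K * R powi (- n)"
      using radii K by (intro norm_fourier_coeff_le_radius) auto
    also have "R powi (- n) = (1 / R) ^ nat \<bar>n\<bar>"
      using True by (simp add: power_int_minus power_int_nonneg_exp power_one_over inverse_eq_divide)
    also have "K * \<dots> \<le> K * \<rho> ^ nat \<bar>n\<bar>"
      using radii K by (intro mult_left_mono power_mono) (auto simp: \<rho>_def)
    finally show ?thesis .
  next
    case False
    have "norm (fourier_coeff v n) \<le> K * r powi (- n)"
      using radii K by (intro norm_fourier_coeff_le_radius) auto
    also have "r powi (- n) = r ^ nat \<bar>n\<bar>"
      using False by (simp add: power_int_nonneg_exp)
    also have "K * \<dots> \<le> K * \<rho> ^ nat \<bar>n\<bar>"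
      using radii K by (intro mult_left_mono power_mono) (auto simp: \<rho>_def)
    finally show ?thesis .
  qed
  then show ?thesis using that \<rho> K by blast
qed

lemma contour_integral_fourier_coeff:
  assumes "r \<le> s" "s \<le> R"
  shows "contour_integral (circlepath 0 s) (\<lambda>u. c * (g u * u powi (- n - 1))) =
           2 * pi * \<i> * c * fourier_coeff v n"
proof -
  have "(\<lambda>u. g u * u powi (- n - 1)) contour_integrable_on circlepath 0 s"
    using continuous_on_sphere[OF assms] assms radii
    by (intro contour_integrable_continuous_circlepath continuous_intros) auto
  then show ?thesis
    by (simp add: contour_integral_lmul fourier_coeff_circlepath[OF assms])
qed

lemma sums_fourier_coeff_nonneg:
  assumes w: "norm w = 1"
  shows "(\<lambda>k. fourier_coeff v (int k) * w ^ k) sums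
           (contour_integral (circlepath 0 R) (\<lambda>u. g u / (u - w)) / (2 * pi * \<i>))"
proof -
  have "(\<lambda>k. contour_integral (circlepath 0 R) (\<lambda>u. (g u / u) * (w / u) ^ k)) sums
          contour_integral (circlepath 0 R) (\<lambda>u. (g u / u) / (1 - w / u))"
    by (rule sums_contour_integral_geometric[where q = "1 / R"])
       (use radii w in \<open>auto intro!: continuous_intros continuous_on_sphere simp: norm_divide\<close>)
  moreover have "contour_integral (circlepath 0 R) (\<lambda>u. (g u / u) * (w / u) ^ k) =
                   2 * pi * \<i> * (fourier_coeff v (int k) * w ^ k)" for k
  proof -
    have "contour_integral (circlepath 0 R) (\<lambda>u. (g u / u) * (w / u) ^ k) =
          contour_integral (circlepath 0 R) (\<lambda>u. w ^ k * (g u * u powi (- int k - 1)))"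
    proof (rule contour_integral_eq)
      fix u :: complex
      have "- int k - 1 = - int (Suc k)" by simp
      then have "u powi (- int k - 1) = 1 / u ^ Suc k"
        by (simp only: power_int_minus power_int_of_nat) (simp add: inverse_eq_divide)
      then show "(g u / u) * (w / u) ^ k = w ^ k * (g u * u powi (- int k - 1))"
        by (simp add: power_divide field_simps)
    qed
    also have "\<dots> = 2 * pi * \<i> * w ^ k * fourier_coeff v (int k)"
      using radii by (intro contour_integral_fourier_coeff) auto
    finally show ?thesis by (simp add: mult_ac)
  qed
  moreover have "contour_integral (circlepath 0 R) (\<lambda>u. (g u / u) / (1 - w / u)) =
                   contour_integral (circlepath 0 R) (\<lambda>u. g u / (u - w))"
  proof (rule contour_integral_eq)
    fix u assume "u \<in> path_image (circlepath 0 R)"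
    then have "u \<noteq> 0" "u \<noteq> w" using radii w by auto
    then show "(g u / u) / (1 - w / u) = g u / (u - w)" by (simp add: field_simps)
  qed
  ultimately have "(\<lambda>k. 2 * pi * \<i> * (fourier_coeff v (int k) * w ^ k)) sums
                     contour_integral (circlepath 0 R) (\<lambda>u. g u / (u - w))"
    by simp
  from sums_divide[OF this, of "2 * pi * \<i>"] show ?thesis by simp
qed

lemma sums_fourier_coeff_neg:
  assumes w: "norm w = 1"
  shows "(\<lambda>k. fourier_coeff v (- int k - 1) * w powi (- int k - 1)) sums
           (- contour_integral (circlepath 0 r) (\<lambda>u. g u / (u - w)) / (2 * pi * \<i>))"
proof -
  have w0: "w \<noteq> 0" using w by auto
  have "(\<lambda>k. contour_integral (circlepath 0 r) (\<lambda>u. (- g u / w) * (u / w) ^ k)) sums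
          contour_integral (circlepath 0 r) (\<lambda>u. (- g u / w) / (1 - u / w))"
    by (rule sums_contour_integral_geometric[where q = r])
       (use radii w in \<open>auto intro!: continuous_intros continuous_on_sphere simp: norm_divide\<close>)
  moreover have "contour_integral (circlepath 0 r) (\<lambda>u. (- g u / w) * (u / w) ^ k) =
          - (2 * pi * \<i>) * (fourier_coeff v (- int k - 1) * w powi (- int k - 1))" for k
  proof -
    have "- int k - 1 = - int (Suc k)" by simp
    then have wk: "w powi (- int k - 1) = 1 / w ^ Suc k"
      by (simp only: power_int_minus power_int_of_nat) (simp add: inverse_eq_divide)
    have "contour_integral (circlepath 0 r) (\<lambda>u. (- g u / w) * (u / w) ^ k) =
          contour_integral (circlepath 0 r)
            (\<lambda>u. - (w powi (- int k - 1)) * (g u * u powi (- (- int k - 1) - 1)))"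
      by (rule contour_integral_eq) (use w0 in \<open>simp add: wk power_divide field_simps\<close>)
    also have "\<dots> = 2 * pi * \<i> * - (w powi (- int k - 1)) * fourier_coeff v (- int k - 1)"
      using radii by (intro contour_integral_fourier_coeff) auto
    finally show ?thesis by (simp add: mult_ac)
  qed
  moreover have "contour_integral (circlepath 0 r) (\<lambda>u. (- g u / w) / (1 - u / w)) =
                   contour_integral (circlepath 0 r) (\<lambda>u. g u / (u - w))"
  proof (rule contour_integral_eq)
    fix u assume "u \<in> path_image (circlepath 0 r)"
    then have "u \<noteq> w" using radii w by auto
    then show "(- g u / w) / (1 - u / w) = g u / (u - w)" using w0 by (simp add: field_simps)
  qed
  ultimately have "(\<lambda>k. - (2 * pi * \<i>) * (fourier_coeff v (- int k - 1) * w powi (- int k - 1)))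
                     sums contour_integral (circlepath 0 r) (\<lambda>u. g u / (u - w))"
    by simp
  from sums_divide[OF this, of "- (2 * pi * \<i>)"] show ?thesis by simp
qed

lemma summable_on_norm_fourier_coeff: "(\<lambda>n. norm (fourier_coeff v n)) summable_on UNIV"
proof -
  obtain \<rho> K where \<rho>: "0 < \<rho>" "\<rho> < 1"
    and decay: "\<And>n. norm (fourier_coeff v n) \<le> K * \<rho> ^ nat \<bar>n\<bar>"
    by (rule fourier_coeff_decay) auto
  have "(\<lambda>n. \<rho> ^ nat \<bar>n\<bar>) summable_on UNIV"
    using has_sum_power_abs_int[of \<rho>] \<rho> by (intro has_sum_imp_summable) auto
  then have "(\<lambda>n. K * \<rho> ^ nat \<bar>n\<bar>) summable_on UNIV"
    by (rule summable_on_cmult_right)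
  then show ?thesis by (rule summable_on_comparison_test) (use decay in auto)
qed

lemma fourier_series_has_sum:
  "((\<lambda>n. fourier_coeff v n * cis (of_int n * \<theta>)) has_sum complex_of_real (v (cis \<theta>))) UNIV"
proof -
  define w where "w = cis \<theta>"
  have w: "norm w = 1" by (simp add: w_def)
  have abs: "(\<lambda>n. norm (fourier_coeff v n * cis (of_int n * \<theta>))) summable_on UNIV"
    using summable_on_norm_fourier_coeff by (simp add: norm_mult)
  have "inj (\<lambda>k::nat. - int k - 1)" by (auto simp: inj_def)
  have "((\<lambda>n. fourier_coeff v n * cis (of_int n * \<theta>)) has_sum
          (contour_integral (circlepath 0 R) (\<lambda>u. g u / (u - w)) / (2 * pi * \<i>) +
           - contour_integral (circlepath 0 r) (\<lambda>u. g u / (u - w)) / (2 * pi * \<i>))) UNIV"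
  proof (rule has_sum_int_from_sums)
    show "summable (\<lambda>k. norm (fourier_coeff v (int k) * cis (of_int (int k) * \<theta>)))"
      using summable_norm_comp_inj[OF abs, of int] by (simp add: inj_of_nat)
    show "summable (\<lambda>k. norm (fourier_coeff v (- int k - 1) * cis (of_int (- int k - 1) * \<theta>)))"
      using summable_norm_comp_inj[OF abs \<open>inj (\<lambda>k::nat. - int k - 1)\<close>] by simp
    show "(\<lambda>k. fourier_coeff v (int k) * cis (of_int (int k) * \<theta>)) sums
            (contour_integral (circlepath 0 R) (\<lambda>u. g u / (u - w)) / (2 * pi * \<i>))"
    proof -
      have "cis (of_int (int k) * \<theta>) = w ^ k" for k by (simp add: w_def Complex.DeMoivre)
      then show ?thesis using sums_fourier_coeff_nonneg[OF w] by simp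
    qed
    show "(\<lambda>k. fourier_coeff v (- int k - 1) * cis (of_int (- int k - 1) * \<theta>)) sums
            (- contour_integral (circlepath 0 r) (\<lambda>u. g u / (u - w)) / (2 * pi * \<i>))"
      using sums_fourier_coeff_neg[OF w] by (simp add: w_def cis_power_int)
  qed
  moreover have "contour_integral (circlepath 0 R) (\<lambda>u. g u / (u - w)) / (2 * pi * \<i>) +
                   - contour_integral (circlepath 0 r) (\<lambda>u. g u / (u - w)) / (2 * pi * \<i>)
                 = complex_of_real (v (cis \<theta>))"
  proof -
    have "2 * pi * \<i> * g w = contour_integral (circlepath 0 R) (\<lambda>u. g u / (u - w))
                               - contour_integral (circlepath 0 r) (\<lambda>u. g u / (u - w))"
      using radii w by (intro Cauchy_integral_annulus[OF open_A holomorphic_g annulus_subset]) auto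
    then have "(contour_integral (circlepath 0 R) (\<lambda>u. g u / (u - w))
                 - contour_integral (circlepath 0 r) (\<lambda>u. g u / (u - w))) / (2 * pi * \<i>) = g w"
      by (metis divide_eq_eq mult.commute mult_eq_0_iff of_real_eq_0_iff pi_neq_zero
                complex_i_not_zero zero_neq_numeral)
    then show ?thesis using g_eq_v[OF w] by (simp add: w_def diff_divide_distrib)
  qed
  ultimately show ?thesis by simp
qed

end

section \<open>Fourier coefficients of products\<close>

definition fourier_coeff_fun :: "(real \<Rightarrow> complex) \<Rightarrow> int \<Rightarrow> complex" where
  "fourier_coeff_fun V n =
     integral {0..2*pi} (\<lambda>\<theta>. V \<theta> * cis (- (of_int n * \<theta>))) / complex_of_real (2*pi)"

lemma integral_cis_int:
  "integral {0..2*pi} (\<lambda>\<theta>. cis (- (of_int d * \<theta>))) = (if d = 0 then 2 * pi else 0)"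
proof (cases "d = 0")
  case True then show ?thesis by (simp add: scaleR_conv_of_real)
next
  case False
  define F where "F = (\<lambda>z::complex. - exp (- (\<i> * of_int d * z)) / (\<i> * of_int d))"
  have "((\<lambda>\<theta>. F (of_real \<theta>)) has_vector_derivative cis (- (of_int d * \<theta>))) (at \<theta> within {0..2*pi})"
    for \<theta>
  proof (rule has_vector_derivative_real_field)
    have "(F has_field_derivative - (exp (- (\<i> * of_int d * of_real \<theta>)) * - (\<i> * of_int d)) / (\<i> * of_int d))
            (at (of_real \<theta>))"
      unfolding F_def by (rule derivative_eq_intros refl)+ (use False in \<open>simp_all add: field_simps\<close>)
    moreover have "- (exp (- (\<i> * of_int d * of_real \<theta>)) * - (\<i> * of_int d)) / (\<i> * of_int d)
                     = cis (- (of_int d * \<theta>))"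
      using False by (simp add: cis_conv_exp mult.assoc)
    ultimately show "(F has_field_derivative cis (- (of_int d * \<theta>))) (at (of_real \<theta>))" by simp
  qed
  then have "((\<lambda>\<theta>. cis (- (of_int d * \<theta>))) has_integral F (of_real (2*pi)) - F (of_real 0)) {0..2*pi}"
    by (intro fundamental_theorem_of_calculus) auto
  moreover have "exp (- (\<i> * of_int d * of_real (2*pi))) = 1"
    using cis_multiple_2pi[of "- of_int d"] by (simp add: cis_conv_exp algebra_simps)
  then have "F (of_real (2*pi)) = F (of_real 0)" by (simp add: F_def)
  ultimately show ?thesis using False by (simp add: integral_unique)
qed

lemma fourier_coeff_fun_one: "fourier_coeff_fun (\<lambda>_. 1) n = (if n = 0 then 1 else 0)"
  by (simp add: fourier_coeff_fun_def integral_cis_int)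

lemma fourier_coeff_fun_0_of_real:
  assumes "F integrable_on {0..2*pi}"
  shows "fourier_coeff_fun (\<lambda>\<theta>. complex_of_real (F \<theta>)) 0 = complex_of_real (integral {0..2*pi} F / (2*pi))"
proof -
  have "integral {0..2*pi} (\<lambda>\<theta>. complex_of_real (F \<theta>)) = complex_of_real (integral {0..2*pi} F)"
    by (intro integral_unique has_integral_of_real integrable_integral assms)
  then show ?thesis by (simp add: fourier_coeff_fun_def)
qed

lemma norm_fourier_coeff_fun_le:
  assumes "continuous_on {0..2*pi} V" and B: "\<And>\<theta>. \<theta> \<in> {0..2*pi} \<Longrightarrow> norm (V \<theta>) \<le> B"
  shows "norm (fourier_coeff_fun V n) \<le> B"
proof -
  have "norm (integral {0..2*pi} (\<lambda>\<theta>. V \<theta> * cis (- (of_int n * \<theta>)))) \<le> B * (2*pi - 0)"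
    using assms by (intro integral_bound continuous_intros) (auto simp: norm_mult)
  then show ?thesis by (simp add: fourier_coeff_fun_def norm_divide field_simps)
qed

lemma has_sum_integral_termwise:
  fixes t :: "'i \<Rightarrow> real \<Rightarrow> 'a::banach"
  assumes cont: "\<And>n. continuous_on {a..b} (t n)"
    and bound: "\<And>n x. x \<in> {a..b} \<Longrightarrow> norm (t n x) \<le> M n" and M: "M summable_on UNIV"
    and G: "\<And>x. x \<in> {a..b} \<Longrightarrow> ((\<lambda>n. t n x) has_sum G x) UNIV"
  shows "((\<lambda>n. integral {a..b} (t n)) has_sum integral {a..b} G) UNIV"
proof -
  have "uniform_limit {a..b} (\<lambda>F x. \<Sum>n\<in>F. t n x) G (finite_subsets_at_top UNIV)"
    by (rule Weierstrass_m_test_general'[OF _ G M]) (use bound in auto)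
  moreover have "continuous_on {a..b} (\<lambda>x. \<Sum>n\<in>F. t n x)" for F
    by (intro continuous_on_sum cont)
  ultimately obtain I J where I: "\<And>F. ((\<lambda>x. \<Sum>n\<in>F. t n x) has_integral I F) {a..b}"
    and J: "(G has_integral J) {a..b}" and IJ: "(I \<longlongrightarrow> J) (finite_subsets_at_top UNIV)"
    by (rule uniform_limit_integral) auto
  have "I F = (\<Sum>n\<in>F. integral {a..b} (t n))" if "finite F" for F
    using has_integral_unique[OF I has_integral_sum[OF that]] cont
    by (simp add: integrable_continuous_interval integrable_integral)
  then have "((\<lambda>F. \<Sum>n\<in>F. integral {a..b} (t n)) \<longlongrightarrow> J) (finite_subsets_at_top UNIV)"
    using IJ by (intro Lim_transform_eventually[OF IJ]) (auto intro!: eventually_finite_subsets_at_top_weakI)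
  then show ?thesis using J by (simp add: has_sum_def integral_unique)
qed

lemma fourier_coeff_fun_mult_has_sum:
  assumes W: "continuous_on {0..2*pi} W" and a: "(\<lambda>n. norm (a n)) summable_on UNIV"
    and V: "\<And>\<theta>. ((\<lambda>n. a n * cis (of_int n * \<theta>)) has_sum V \<theta>) UNIV"
  shows "((\<lambda>n. fourier_coeff_fun W (d - n) * a n) has_sum fourier_coeff_fun (\<lambda>\<theta>. W \<theta> * V \<theta>) d) UNIV"
proof -
  define t where "t = (\<lambda>n \<theta>. a n * (W \<theta> * cis (- (of_int (d - n) * \<theta>))))"
  obtain B where B: "\<And>\<theta>. \<theta> \<in> {0..2*pi} \<Longrightarrow> norm (W \<theta>) \<le> B"
    using continuous_on_compact_bound[OF compact_Icc W] by blast
  have "((\<lambda>n. integral {0..2*pi} (t n)) has_sum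
          integral {0..2*pi} (\<lambda>\<theta>. W \<theta> * V \<theta> * cis (- (of_int d * \<theta>)))) UNIV"
  proof (rule has_sum_integral_termwise)
    show "continuous_on {0..2*pi} (t n)" for n
      unfolding t_def by (intro continuous_intros W)
    show "norm (t n \<theta>) \<le> B * norm (a n)" if "\<theta> \<in> {0..2*pi}" for n \<theta>
      using mult_left_mono[OF B[OF that] norm_ge_zero[of "a n"]]
      by (simp add: t_def norm_mult mult.commute)
    show "(\<lambda>n. B * norm (a n)) summable_on UNIV" using a by (rule summable_on_cmult_right)
    show "((\<lambda>n. t n \<theta>) has_sum W \<theta> * V \<theta> * cis (- (of_int d * \<theta>))) UNIV" for \<theta>
    proof -
      have "t n \<theta> = W \<theta> * cis (- (of_int d * \<theta>)) * (a n * cis (of_int n * \<theta>))" for n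
        by (simp add: t_def cis_mult algebra_simps)
      then show ?thesis
        using has_sum_cmult_right[OF V, of "W \<theta> * cis (- (of_int d * \<theta>))"] by (simp add: mult_ac)
    qed
  qed
  moreover have "integral {0..2*pi} (t n) = 2 * pi * (fourier_coeff_fun W (d - n) * a n)" for n
    by (simp add: t_def fourier_coeff_fun_def)
  ultimately have "((\<lambda>n. 2 * pi * (fourier_coeff_fun W (d - n) * a n)) has_sum
                      2 * pi * fourier_coeff_fun (\<lambda>\<theta>. W \<theta> * V \<theta>) d) UNIV"
    by (simp add: fourier_coeff_fun_def mult.assoc)
  then show ?thesis by (simp add: has_sum_cmult_right_iff)
qed

section \<open>Powers of Toeplitz matrices\<close>

lemma power_exponent_shift_le:
  fixes r :: real
  assumes "0 \<le> r" "r \<le> 1"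
  shows "r ^ nat m * r ^ (2 * nat \<bar>m - int k\<bar>) \<le> r ^ k * r ^ nat \<bar>m - int k\<bar>"
proof -
  have "r ^ (nat m + 2 * nat \<bar>m - int k\<bar>) \<le> r ^ (k + nat \<bar>m - int k\<bar>)"
    using assms by (intro power_decreasing) auto
  then show ?thesis by (simp add: power_add)
qed

definition toeplitz :: "(int \<Rightarrow> complex) \<Rightarrow> imat" where
  "toeplitz a j k = a (int j - int k)"

definition compress_plus :: "imat \<Rightarrow> imat" where
  "compress_plus A j k = (if 1 \<le> j \<and> 1 \<le> k then A j k else 0)"

lemma toeplitz_mat_eq: "toeplitz_mat v = toeplitz (fourier_coeff v)"
  by (simp add: fun_eq_iff toeplitz_mat_def toeplitz_def)

lemma toeplitz_plus_mat_eq: "toeplitz_plus_mat v = compress_plus (toeplitz_mat v)"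
  by (simp add: fun_eq_iff toeplitz_plus_mat_def compress_plus_def)

lemma imat_mult_id_left: "imat_mult imat_id B = B"
proof (intro ext)
  fix j k
  have "(\<lambda>m. imat_id j m * B m k) = (\<lambda>m. if m = j then B j k else 0)"
    by (auto simp: imat_id_def)
  then show "imat_mult imat_id B j k = B j k"
    unfolding imat_mult_def using sums_single[of j "\<lambda>_. B j k"] sums_unique by fastforce
qed

lemma suminf_shift_zero:
  fixes f :: "nat \<Rightarrow> 'a::real_normed_vector"
  assumes "f 0 = 0"
  shows "(\<Sum>n. f (Suc n)) = suminf f"
proof -
  have "(\<lambda>s. (\<lambda>n. f (Suc n)) sums s) = (\<lambda>s. f sums s)"
    using sums_Suc_iff[of f] assms by auto
  then show ?thesis unfolding suminf_def by simp
qed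

text \<open>No summability is needed here: shifting the index of a \<open>suminf\<close> whose first term vanishes
  does not change its value.\<close>
lemma imat_pow_compress_plus_toeplitz:
  "imat_pow (compress_plus (toeplitz a)) (Suc l) j k =
     (if 1 \<le> j \<and> 1 \<le> k then imat_pow (toeplitz a) (Suc l) (j - 1) (k - 1) else 0)"
proof (induction l arbitrary: j k)
  case 0
  show ?case
    by (simp add: imat_mult_id_left compress_plus_def toeplitz_def of_nat_diff)
next
  case (Suc l)
  let ?T = "toeplitz a" and ?Tp = "compress_plus (toeplitz a)"
  have "imat_pow ?Tp (Suc (Suc l)) j k = (\<Sum>m. imat_pow ?Tp (Suc l) j m * ?Tp m k)"
    by (simp only: imat_pow.simps(2) imat_mult_def)
  also have "\<dots> = (\<Sum>m. if 1 \<le> j \<and> 1 \<le> k \<and> 1 \<le> m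
                          then imat_pow ?T (Suc l) (j - 1) (m - 1) * a (int m - int k) else 0)"
    by (intro arg_cong[where f = suminf] ext)
       (simp only: Suc.IH, simp add: compress_plus_def toeplitz_def del: imat_pow.simps)
  also have "\<dots> = (if 1 \<le> j \<and> 1 \<le> k then imat_pow ?T (Suc (Suc l)) (j - 1) (k - 1) else 0)"
  proof (cases "1 \<le> j \<and> 1 \<le> k")
    case True
    have "(\<Sum>m. if 1 \<le> j \<and> 1 \<le> k \<and> 1 \<le> m
                  then imat_pow ?T (Suc l) (j - 1) (m - 1) * a (int m - int k) else 0)
        = (\<Sum>m. imat_pow ?T (Suc l) (j - 1) m * ?T m (k - 1))"
      using True
      by (subst suminf_shift_zero[symmetric])
         (simp_all add: toeplitz_def of_nat_diff algebra_simps del: imat_pow.simps)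
    also have "\<dots> = imat_pow ?T (Suc (Suc l)) (j - 1) (k - 1)"
      by (simp only: imat_pow.simps(2) imat_mult_def)
    finally show ?thesis using True by simp
  next
    case False
    then have "(\<lambda>m. if 1 \<le> j \<and> 1 \<le> k \<and> 1 \<le> m
                      then imat_pow ?T (Suc l) (j - 1) (m - 1) * a (int m - int k) else 0) = (\<lambda>m. 0)"
      by auto
    then show ?thesis using False by (auto simp del: imat_pow.simps)
  qed
  finally show ?case .
qed

text \<open>Row \<open>j\<close> of \<open>P\<close> extended by zero to negative indices, so that a product with a Toeplitz
  matrix becomes a convolution over \<open>\<int>\<close>.\<close>
definition row_ext :: "imat \<Rightarrow> nat \<Rightarrow> int \<Rightarrow> complex" where
  "row_ext P j m = (if 0 \<le> m then P j (nat m) else 0)"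

text \<open>The decay rate \<open>r\<^sup>2\<close> of the symbol leaves room for an error of order \<open>r\<^sup>k\<close> in the column
  index \<open>k\<close> when comparing \<open>T\<^sup>l\<close> with the Toeplitz matrix of the convolution power \<open>c l\<close>.\<close>
locale toeplitz_convolution_powers =
  fixes a :: "int \<Rightarrow> complex" and c :: "nat \<Rightarrow> int \<Rightarrow> complex" and r M C :: real
  assumes r: "0 < r" "r < 1" and M: "0 \<le> M" and C: "0 \<le> C"
    and decay: "\<And>n. norm (a n) \<le> M * r ^ (2 * nat \<bar>n\<bar>)"
    and bounded: "\<And>l d. norm (c l d) \<le> C ^ l"
    and c_0: "\<And>d. c 0 d = (if d = 0 then 1 else 0)"
    and c_Suc: "\<And>l d. ((\<lambda>n. c l (d - n) * a n) has_sum c (Suc l) d) UNIV"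
begin

lemma has_sum_power_abs_shift:
  "((\<lambda>m. r ^ nat \<bar>m - int k\<bar>) has_sum (1 + r) / (1 - r)) UNIV"
proof -
  have "((\<lambda>n. r ^ nat \<bar>n\<bar>) has_sum (1 + r) / (1 - r)) UNIV"
    using r by (intro has_sum_power_abs_int) auto
  also have "?this \<longleftrightarrow> ?thesis"
    by (rule has_sum_reindex_bij_witness[where i = "\<lambda>m. m - int k" and j = "\<lambda>n. n + int k"]) auto
  finally show ?thesis .
qed

lemma summable_on_power_abs_shift: "(\<lambda>m. B * r ^ nat \<bar>m - int k\<bar>) summable_on UNIV"
  using has_sum_power_abs_shift summable_on_cmult_right has_sum_imp_summable by blast

lemma norm_symbol_le: "norm (a n) \<le> M * r ^ nat \<bar>n\<bar>"
proof -
  have "r ^ (2 * nat \<bar>n\<bar>) \<le> r ^ nat \<bar>n\<bar>" using r by (intro power_decreasing) auto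
  then show ?thesis using decay[of n] M by (meson mult_left_mono order_trans)
qed

lemma c_Suc_shifted: "((\<lambda>m. c l (x - m) * a (m - y)) has_sum c (Suc l) (x - y)) UNIV"
proof -
  have "((\<lambda>n. c l (x - y - n) * a n) has_sum c (Suc l) (x - y)) UNIV"
    by (rule c_Suc)
  also have "?this \<longleftrightarrow> ?thesis"
    by (rule has_sum_reindex_bij_witness[where i = "\<lambda>m. m - y" and j = "\<lambda>n. n + y"])
       (auto simp: algebra_simps)
  finally show ?thesis .
qed

lemma has_sum_row_ext_mult_toeplitz:
  assumes D: "\<And>m. norm (P j m) \<le> D"
  shows "((\<lambda>m. row_ext P j m * a (m - int k)) has_sum imat_mult P (toeplitz a) j k) UNIV"
proof -
  have "0 \<le> D" using D[of 0] norm_ge_zero order_trans by blast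
  then have "norm (row_ext P j m * a (m - int k)) \<le> D * M * r ^ nat \<bar>m - int k\<bar>" for m
    unfolding norm_mult row_ext_def using D M r norm_symbol_le[of "m - int k"]
    by (auto intro!: mult_mono simp: mult.assoc)
  then have "(\<lambda>m. norm (row_ext P j m * a (m - int k))) summable_on UNIV"
    by (rule summable_on_comparison_test[OF summable_on_power_abs_shift]) auto
  from summable_norm_comp_inj[OF this, of int]
  have "summable (\<lambda>n. norm (P j n * a (int n - int k)))"
    by (simp add: row_ext_def)
  moreover have "(\<lambda>n. P j n * a (int n - int k)) sums imat_mult P (toeplitz a) j k"
    using summable_sums[OF summable_norm_cancel[OF calculation]]
    by (simp add: imat_mult_def toeplitz_def)
  ultimately show ?thesis
    using has_sum_int_from_sums[of "\<lambda>m. row_ext P j m * a (m - int k)" _ 0]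
    by (simp add: row_ext_def)
qed

lemma imat_pow_toeplitz_approx_Suc:
  assumes E: "0 \<le> E" "\<And>j k. norm (imat_pow (toeplitz a) l j k - c l (int j - int k)) \<le> E * r ^ k"
  shows "norm (imat_pow (toeplitz a) (Suc l) j k - c (Suc l) (int j - int k))
           \<le> (E + C ^ l) * M * ((1 + r) / (1 - r)) * r ^ k"
proof -
  let ?P = "imat_pow (toeplitz a) l"
  define e where "e m = (row_ext ?P j m - c l (int j - m)) * a (m - int k)" for m
  have row_err: "norm (row_ext ?P j m - c l (int j - m)) \<le> (E + C ^ l) * r ^ nat m" for m
  proof (cases "0 \<le> m")
    case True
    have "norm (row_ext ?P j m - c l (int j - m)) \<le> E * r ^ nat m"
      using E(2)[of j "nat m"] True by (simp add: row_ext_def)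
    also have "\<dots> \<le> (E + C ^ l) * r ^ nat m" using r C by (intro mult_right_mono) auto
    finally show ?thesis .
  next
    case False
    then show ?thesis using bounded[of l "int j - m"] E by (simp add: row_ext_def)
  qed
  have e_bound: "norm (e m) \<le> (E + C ^ l) * M * r ^ k * r ^ nat \<bar>m - int k\<bar>" for m
  proof -
    have "norm (e m) \<le> ((E + C ^ l) * r ^ nat m) * (M * r ^ (2 * nat \<bar>m - int k\<bar>))"
      unfolding e_def norm_mult using r E C by (intro mult_mono row_err decay) auto
    also have "\<dots> = (E + C ^ l) * M * (r ^ nat m * r ^ (2 * nat \<bar>m - int k\<bar>))" by (simp add: mult_ac)
    also have "\<dots> \<le> (E + C ^ l) * M * (r ^ k * r ^ nat \<bar>m - int k\<bar>)"
      using r E C M by (intro mult_left_mono power_exponent_shift_le) auto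
    finally show ?thesis by (simp add: mult_ac)
  qed
  have "norm (?P j m) \<le> E + C ^ l" for m
  proof -
    have "norm (?P j m) \<le> norm (?P j m - c l (int j - int m)) + norm (c l (int j - int m))"
      by (metis diff_add_cancel norm_triangle_ineq)
    also have "\<dots> \<le> E * 1 + C ^ l"
      using r E by (intro add_mono order_trans[OF E(2)] mult_left_mono power_le_one bounded) auto
    finally show ?thesis by simp
  qed
  then have row: "((\<lambda>m. row_ext ?P j m * a (m - int k)) has_sum imat_pow (toeplitz a) (Suc l) j k) UNIV"
    unfolding imat_pow.simps by (rule has_sum_row_ext_mult_toeplitz)
  have "e = (\<lambda>m. row_ext ?P j m * a (m - int k) + - (c l (int j - m) * a (m - int k)))"
    by (simp add: fun_eq_iff e_def algebra_simps)
  then have "(e has_sum (imat_pow (toeplitz a) (Suc l) j k - c (Suc l) (int j - int k))) UNIV"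
    using has_sum_add[OF row has_sum_uminusI[OF c_Suc_shifted]] by simp
  moreover have "((\<lambda>m. (E + C ^ l) * M * r ^ k * r ^ nat \<bar>m - int k\<bar>) has_sum
                    (E + C ^ l) * M * r ^ k * ((1 + r) / (1 - r))) UNIV"
    by (rule has_sum_cmult_right[OF has_sum_power_abs_shift])
  ultimately have "norm (imat_pow (toeplitz a) (Suc l) j k - c (Suc l) (int j - int k))
                     \<le> (E + C ^ l) * M * r ^ k * ((1 + r) / (1 - r))"
    by (rule norm_infsum_le) (rule e_bound)
  then show ?thesis by (simp add: mult_ac)
qed

lemma imat_pow_toeplitz_approx:
  "\<exists>E\<ge>0. \<forall>j k. norm (imat_pow (toeplitz a) l j k - c l (int j - int k)) \<le> E * r ^ k"
proof (induction l)
  case 0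
  have "imat_id j k = c 0 (int j - int k)" for j k by (simp add: imat_id_def c_0)
  then show ?case by (intro exI[of _ 0]) simp
next
  case (Suc l)
  then obtain E where "0 \<le> E"
    and "\<And>j k. norm (imat_pow (toeplitz a) l j k - c l (int j - int k)) \<le> E * r ^ k"
    by blast
  then have "norm (imat_pow (toeplitz a) (Suc l) j k - c (Suc l) (int j - int k))
               \<le> (E + C ^ l) * M * ((1 + r) / (1 - r)) * r ^ k" for j k
    by (rule imat_pow_toeplitz_approx_Suc)
  moreover have "0 \<le> (E + C ^ l) * M * ((1 + r) / (1 - r))"
    using \<open>0 \<le> E\<close> C M r by simp
  ultimately show ?case by blast
qed

text \<open>The partial sums telescope to the single diagonal entry \<open>(T\<^sup>l)\<^sub>N\<^sub>N\<close>, which tends to \<open>c l 0\<close>.\<close>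
theorem sums_diagonal_difference:
  assumes "1 \<le> l"
  shows "(\<lambda>j. imat_pow (toeplitz a) l j j - imat_pow (compress_plus (toeplitz a)) l j j) sums c l 0"
proof -
  obtain l' where l': "l = Suc l'" using assms by (cases l) auto
  obtain E where E: "\<And>j k. norm (imat_pow (toeplitz a) l j k - c l (int j - int k)) \<le> E * r ^ k"
    using imat_pow_toeplitz_approx by blast
  have partial_sums: "(\<Sum>j<Suc N. imat_pow (toeplitz a) l j j - imat_pow (compress_plus (toeplitz a)) l j j)
                        = imat_pow (toeplitz a) l N N" for N
    by (induction N) (simp_all add: l' imat_pow_compress_plus_toeplitz del: imat_pow.simps)
  have "(\<lambda>N. E * r ^ N) \<longlonglongrightarrow> 0"
    using r tendsto_mult_right_zero[OF LIMSEQ_power_zero[of r]] by simp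
  then have "(\<lambda>N. imat_pow (toeplitz a) l N N - c l 0) \<longlonglongrightarrow> 0"
    by (rule Lim_null_comparison[rotated]) (use E[of N N for N] in \<open>simp add: always_eventually\<close>)
  then have "(\<lambda>N. imat_pow (toeplitz a) l N N) \<longlonglongrightarrow> c l 0"
    by (simp add: LIM_zero_iff)
  then show ?thesis
    unfolding sums_def by (subst filterlim_sequentially_Suc[symmetric]) (simp only: partial_sums)
qed

end

section \<open>The moments of the spectral shift function\<close>

context analytic_circle_symbol
begin

lemma toeplitz_convolution_powers_symbol:
  obtains q M C where
    "toeplitz_convolution_powers (fourier_coeff v)
       (\<lambda>l. fourier_coeff_fun (\<lambda>\<theta>. complex_of_real (v (cis \<theta>)) ^ l)) q M C"
proof -
  obtain \<rho> K where \<rho>: "0 < \<rho>" "\<rho> < 1" and K: "0 \<le> K"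
    and decay: "\<And>n. norm (fourier_coeff v n) \<le> K * \<rho> ^ nat \<bar>n\<bar>"
    by (rule fourier_coeff_decay) auto
  define V where "V \<theta> = complex_of_real (v (cis \<theta>))" for \<theta>
  have V: "continuous_on {0..2*pi} V"
    unfolding V_def by (intro continuous_intros continuous_on_subset[OF continuous_on_symbol]) auto
  obtain B where B: "0 \<le> B" "\<And>\<theta>. \<theta> \<in> {0..2*pi} \<Longrightarrow> norm (V \<theta>) \<le> B"
    using continuous_on_compact_bound[OF compact_Icc V] by blast
  have "toeplitz_convolution_powers (fourier_coeff v) (\<lambda>l. fourier_coeff_fun (\<lambda>\<theta>. V \<theta> ^ l))
          (sqrt \<rho>) K B"
  proof
    show "norm (fourier_coeff v n) \<le> K * sqrt \<rho> ^ (2 * nat \<bar>n\<bar>)" for n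
      using decay[of n] \<rho> by (simp add: power_mult)
    show "norm (fourier_coeff_fun (\<lambda>\<theta>. V \<theta> ^ l) d) \<le> B ^ l" for l d
      using V B by (intro norm_fourier_coeff_fun_le continuous_intros) (auto simp: norm_power power_mono)
    show "fourier_coeff_fun (\<lambda>\<theta>. V \<theta> ^ 0) d = (if d = 0 then 1 else 0)" for d
      by (simp add: fourier_coeff_fun_one)
    show "((\<lambda>n. fourier_coeff_fun (\<lambda>\<theta>. V \<theta> ^ l) (d - n) * fourier_coeff v n) has_sum
            fourier_coeff_fun (\<lambda>\<theta>. V \<theta> ^ Suc l) d) UNIV" for l d
    proof -
      have "((\<lambda>n. fourier_coeff_fun (\<lambda>\<theta>. V \<theta> ^ l) (d - n) * fourier_coeff v n) has_sum
               fourier_coeff_fun (\<lambda>\<theta>. V \<theta> ^ l * V \<theta>) d) UNIV"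
        by (rule fourier_coeff_fun_mult_has_sum[OF _ summable_on_norm_fourier_coeff])
           (use V fourier_series_has_sum in \<open>auto simp: V_def intro: continuous_intros\<close>)
      then show ?thesis by (simp add: mult.commute)
    qed
  qed (use \<rho> K B in auto)
  then show ?thesis using that unfolding V_def by blast
qed

theorem sums_diagonal_difference_symbol:
  assumes "1 \<le> l"
  shows "(\<lambda>j. imat_pow (toeplitz_mat v) l j j - imat_pow (toeplitz_plus_mat v) l j j)
           sums complex_of_real (integral {0..2*pi} (\<lambda>\<theta>. v (cis \<theta>) ^ l) / (2*pi))"
proof -
  obtain q M C where "toeplitz_convolution_powers (fourier_coeff v)
       (\<lambda>l. fourier_coeff_fun (\<lambda>\<theta>. complex_of_real (v (cis \<theta>)) ^ l)) q M C"
    by (rule toeplitz_convolution_powers_symbol)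
  from toeplitz_convolution_powers.sums_diagonal_difference[OF this assms]
  have sums: "(\<lambda>j. imat_pow (toeplitz_mat v) l j j - imat_pow (toeplitz_plus_mat v) l j j)
               sums fourier_coeff_fun (\<lambda>\<theta>. complex_of_real (v (cis \<theta>)) ^ l) 0"
    by (simp add: toeplitz_plus_mat_eq toeplitz_mat_eq)
  have "(\<lambda>\<theta>. v (cis \<theta>) ^ l) integrable_on {0..2*pi}"
    by (intro integrable_continuous_interval continuous_intros
              continuous_on_subset[OF continuous_on_symbol]) auto
  then have "fourier_coeff_fun (\<lambda>\<theta>. complex_of_real (v (cis \<theta>)) ^ l) 0 =
               complex_of_real (integral {0..2*pi} (\<lambda>\<theta>. v (cis \<theta>) ^ l) / (2*pi))"
    unfolding of_real_power[symmetric] by (rule fourier_coeff_fun_0_of_real)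
  with sums show ?thesis by (simp only:)
qed

end

definition angle_pushforward :: "(real \<Rightarrow> real) \<Rightarrow> real measure" where
  "angle_pushforward f = distr (uniform_measure lborel {0..2*pi}) borel f"

lemma sets_angle_pushforward [simp]: "sets (angle_pushforward f) = sets borel"
  by (simp add: angle_pushforward_def)

lemma finite_measure_angle_pushforward:
  assumes "f \<in> borel_measurable borel"
  shows "finite_measure (angle_pushforward f)"
proof -
  have "finite_measure (uniform_measure lborel {0..2*pi})"
    by (intro finite_measureI) (simp add: ennreal_divide_self)
  then show ?thesis
    unfolding angle_pushforward_def using assms by (intro finite_measure.finite_measure_distr) auto
qed

lemma measure_angle_pushforward_lessThan:
  assumes f: "f \<in> borel_measurable borel"
  shows "measure (angle_pushforward f) {..<c} = measure lborel {\<theta>\<in>{0..<2*pi}. f \<theta> < c} / (2*pi)"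
proof -
  have pre: "f -` {..<c} \<in> sets borel" using f by (simp add: measurable_sets_borel)
  have "measure (angle_pushforward f) {..<c} = measure lborel ({0..2*pi} \<inter> f -` {..<c}) / (2*pi)"
    unfolding angle_pushforward_def using f pre by (simp add: measure_distr)
  also have "measure lborel ({0..2*pi} \<inter> f -` {..<c}) = measure lborel {\<theta>\<in>{0..<2*pi}. f \<theta> < c}"
  proof (rule measure_eq_AE)
    show "AE \<theta> in lborel. \<theta> \<in> {0..2*pi} \<inter> f -` {..<c} \<longleftrightarrow> \<theta> \<in> {\<theta>\<in>{0..<2*pi}. f \<theta> < c}"
      using AE_lborel_singleton[of "2*pi"] by eventually_elim auto
    have "{\<theta>\<in>{0..<2*pi}. f \<theta> < c} = {0..<2*pi} \<inter> f -` {..<c}" by auto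
    then show "{\<theta>\<in>{0..<2*pi}. f \<theta> < c} \<in> sets lborel" using pre by simp
  qed (use pre in simp)
  finally show ?thesis .
qed

lemma integral_angle_pushforward:
  assumes f: "continuous_on UNIV f" and h: "continuous_on UNIV h"
  shows "(\<integral>x. h x \<partial>angle_pushforward f) = integral {0..2*pi} (\<lambda>\<theta>. h (f \<theta>)) / (2*pi)"
proof -
  have fb: "f \<in> borel_measurable borel" using f by (rule borel_measurable_continuous_onI)
  have hb: "h \<in> borel_measurable borel" using h by (rule borel_measurable_continuous_onI)
  have "(\<integral>x. h x \<partial>angle_pushforward f) = (\<integral>\<theta>. h (f \<theta>) \<partial>uniform_measure lborel {0..2*pi})"
    unfolding angle_pushforward_def using fb hb by (simp add: integral_distr)
  also have "uniform_measure lborel {0..2*pi} =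
               density lborel (\<lambda>\<theta>. ennreal (indicator {0..2*pi} \<theta> / (2*pi)))"
    unfolding uniform_measure_def
    by (rule density_cong) (auto split: split_indicator simp: divide_ennreal[symmetric])
  also have "(\<integral>\<theta>. h (f \<theta>) \<partial>\<dots>) = (\<integral>\<theta>. (indicator {0..2*pi} \<theta> / (2*pi)) *\<^sub>R h (f \<theta>) \<partial>lborel)"
    using fb hb by (intro integral_density) auto
  also have "\<dots> = (\<integral>\<theta>. indicator {0..2*pi} \<theta> *\<^sub>R h (f \<theta>) \<partial>lborel) / (2*pi)"
    by (simp add: indicator_times_eq_if)
  also have "(\<integral>\<theta>. indicator {0..2*pi} \<theta> *\<^sub>R h (f \<theta>) \<partial>lborel) = integral {0..2*pi} (\<lambda>\<theta>. h (f \<theta>))"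
  proof -
    have "set_integrable lborel {0..2*pi} (\<lambda>\<theta>. h (f \<theta>))"
      unfolding set_integrable_def using f h
      by (intro borel_integrable_compact continuous_on_compose2[OF h] continuous_on_subset[OF f]) auto
    from set_borel_integral_eq_integral(2)[OF this] show ?thesis
      by (simp add: set_lebesgue_integral_def)
  qed
  finally show ?thesis .
qed

theorem corollary2p3:
  fixes v :: "complex \<Rightarrow> real"
  assumes "analytic_on_circle v"
  shows "\<exists>\<mu>::real measure. finite_measure \<mu> \<and> sets \<mu> = sets borel \<and>
           (\<forall>c. measure \<mu> {..<c} = ssf_claim v c) \<and>
           (\<forall>l::nat. l \<ge> 1 \<longrightarrow>
              (\<lambda>j. imat_pow (toeplitz_mat v) l j j - imat_pow (toeplitz_plus_mat v) l j j)
                sums complex_of_real (\<integral>c. c ^ l \<partial>\<mu>))"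
proof -
  obtain g A r R where "analytic_circle_symbol v g A r R"
    using analytic_on_circle_imp_symbol[OF assms] .
  then interpret analytic_circle_symbol v g A r R .
  let ?f = "\<lambda>\<theta>. v (cis \<theta>)"
  have f_borel: "?f \<in> borel_measurable borel"
    using continuous_on_symbol by (rule borel_measurable_continuous_onI)
  show ?thesis
  proof (intro exI[of _ "angle_pushforward ?f"] conjI allI impI)
    show "finite_measure (angle_pushforward ?f)"
      using f_borel by (rule finite_measure_angle_pushforward)
    show "measure (angle_pushforward ?f) {..<c} = ssf_claim v c" for c
      using f_borel by (simp add: measure_angle_pushforward_lessThan ssf_claim_def)
    show "(\<lambda>j. imat_pow (toeplitz_mat v) l j j - imat_pow (toeplitz_plus_mat v) l j j)
            sums complex_of_real (\<integral>x. x ^ l \<partial>angle_pushforward ?f)" if "1 \<le> l" for l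
      using sums_diagonal_difference_symbol[OF that]
      by (simp add: integral_angle_pushforward[OF continuous_on_symbol] continuous_intros)
  qed simp
qed

end
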